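(* Let $\mathcal{I}\subseteq\mathcal{M}_m$ be decreasing, $r=\max_{u\in\mathcal{I}}\deg(u)$, and $f,g\in\mathcal{I}_r$. Suppose that either (1) the two largest indices in $\operatorname{ind}\bigl(fg/\gcd(f,g)\bigr)$ both belong to $\operatorname{ind}(f)$, or both belong to $\operatorname{ind}(g)$; or (2) $\deg(\gcd(f,g))<r-2$. Then $$\bigl|\mathrm{LTA}(m,2)\cdot f+\mathrm{LTA}(m,2)\cdot g\bigr|=\bigl|\mathrm{LTA}(m,2)\cdot f\bigr|\cdot\bigl|\mathrm{LTA}(m,2)\cdot g\bigr|.$$
   Context: $\mathcal{M}_m$ is the set of square-free monomials in $x_0,\dots,x_{m-1}$ (in $\mathbf{R}_m=\mathbb{F}_2[x_0,\dots,x_{m-1}]/(x_i^2-x_i)$). For a monomial $f$, $\operatorname{ind}(f)$ is its set of variable indices, $\deg f=|\operatorname{ind} f|$; $fg$ has index set $\operatorname{ind}(f)\cup\operatorname{ind}(g)$, $\gcd(f,g)$ has index set $\operatorname{ind}(f)\cap\operatorname{ind}(g)$. Decreasing sets: $f\preceq_w g$ iff $f\mid g$; for equal degree $f=x_{i_1}\cdots x_{i_s}$, $g=x_{j_1}\cdots x_{j_s}$ (increasing indices), $f\preceq_{sh} g$ iff $i_\ell\le j_\ell$ for all $\ell$; $f\preceq g$ iff $f\preceq_{sh}g^*\preceq_w g$ for some $g^*$; $\mathcal{I}$ is decreasing if $f\in\mathcal{I}$, $g\preceq f$ imply $g\in\mathcal{I}$; $\mathcal{I}_r$ is the set of degree-$r$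 elements of $\mathcal{I}$. $\mathrm{LTA}(m,2)$ is the group of pairs $(\mathbf{B},\varepsilon)$, $\mathbf{B}=(b_{i,j})$ binary lower triangular $m\times m$ with unit diagonal, $\varepsilon\in\mathbb{F}_2^m$, acting on a monomial $u$ by $x_i\mapsto x_i+\sum_{j<i}b_{i,j}x_j+\varepsilon_i$ for $i\in\operatorname{ind}(u)$; $\mathrm{LTA}(m,2)\cdot f$ is the orbit (a set of polynomials). $A+B=\{a+b: a\in A,b\in B\}$. *)

theory Defs
  imports Main
begin

text \<open>
  Elements of R_m = F_2[x_0..x_{m-1}]/(x_i^2 - x_i) are represented by their
  (unique) expansion as a sum of square-free monomials with coefficients in F_2:
  a polynomial is the finite set of monomials occurring with coefficient 1, and
  a square-free monomial is represented by its index set ind(u).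
\<close>

type_synonym monomial = "nat set"
type_synonym rpoly = "nat set set"

definition monomials :: "nat \<Rightarrow> monomial set" where
  "monomials m = Pow {..<m}"

definition Rm :: "nat \<Rightarrow> rpoly set" where
  "Rm m = Pow (monomials m)"

definition radd :: "rpoly \<Rightarrow> rpoly \<Rightarrow> rpoly" where
  "radd p q = (p - q) \<union> (q - p)"

text \<open>Product in R_m: monomials multiply by union of index sets (x_i^2 = x_i),
  coefficients are counted modulo 2.\<close>
definition rmul :: "rpoly \<Rightarrow> rpoly \<Rightarrow> rpoly" where
  "rmul p q = {S. odd (card {(A, B). A \<in> p \<and> B \<in> q \<and> A \<union> B = S})}"

definition rone :: rpoly where
  "rone = {{}}"

definition rprod_list :: "rpoly list \<Rightarrow> rpoly" where
  "rprod_list ps = foldr rmul ps rone"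

text \<open>LTA(m,2): pairs (B, eps); B is a binary lower triangular m x m matrix with
  unit diagonal, represented by its strictly-lower entries (B i j for j < i < m),
  eps a vector in F_2^m.\<close>
definition LTA :: "nat \<Rightarrow> ((nat \<Rightarrow> nat \<Rightarrow> bool) \<times> (nat \<Rightarrow> bool)) set" where
  "LTA m = {(B, eps). (\<forall>i j. B i j \<longrightarrow> j < i \<and> i < m) \<and> (\<forall>i. eps i \<longrightarrow> i < m)}"

definition lta_var :: "(nat \<Rightarrow> nat \<Rightarrow> bool) \<Rightarrow> (nat \<Rightarrow> bool) \<Rightarrow> nat \<Rightarrow> rpoly" where
  "lta_var B eps i = {{i}} \<union> {{j} | j. j < i \<and> B i j} \<union> (if eps i then {{}} else {})"

definition lta_act :: "(nat \<Rightarrow> nat \<Rightarrow> bool) \<times> (nat \<Rightarrow> bool) \<Rightarrow> monomial \<Rightarrow> rpoly" where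
  "lta_act Be u = rprod_list (map (lta_var (fst Be) (snd Be)) (sorted_list_of_set u))"

definition orbit :: "nat \<Rightarrow> monomial \<Rightarrow> rpoly set" where
  "orbit m u = (\<lambda>Be. lta_act Be u) ` LTA m"

definition sumset :: "rpoly set \<Rightarrow> rpoly set \<Rightarrow> rpoly set" where
  "sumset A B = {radd a b | a b. a \<in> A \<and> b \<in> B}"

definition weak_le :: "monomial \<Rightarrow> monomial \<Rightarrow> bool" where
  "weak_le f g \<longleftrightarrow> f \<subseteq> g"

definition shift_le :: "monomial \<Rightarrow> monomial \<Rightarrow> bool" where
  "shift_le f g \<longleftrightarrow> card f = card g \<and>
     (\<forall>l < card f. sorted_list_of_set f ! l \<le> sorted_list_of_set g ! l)"

definition mono_le :: "monomial \<Rightarrow> monomial \<Rightarrow> bool" where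
  "mono_le f g \<longleftrightarrow> (\<exists>g'. shift_le f g' \<and> weak_le g' g)"

definition decreasing :: "nat \<Rightarrow> monomial set \<Rightarrow> bool" where
  "decreasing m I \<longleftrightarrow> I \<subseteq> monomials m \<and>
     (\<forall>f \<in> I. \<forall>g \<in> monomials m. mono_le g f \<longrightarrow> g \<in> I)"

end

theory Submission
  imports Defs
begin

(*
  Evaluation at 0/1-points identifies R_m with the Boolean functions on F_2^m. The image of a
  monomial f under (B, eps) is the indicator of a triangular flat: the set of points at which each
  pivot coordinate x_i, i in ind(f), equals a fixed affine function of x_0, ..., x_{i-1}. A
  polynomial is determined by its values and a flat determines its pivot set, so it suffices to
  show: if the symmetric difference of two flats with pivot set f equals that of two flats with
  pivot set g, then the first two flats coincide, unless (f, g) is an excluded pair.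

  This is proved by induction on the number of variables, splitting every flat at the top
  coordinate. Two facts drive the induction: a triangular flat cut by a hyperplane is empty, the
  whole flat, or a triangular flat with one more pivot; and if the symmetric difference of two flats
  with pivot set g is a flat with pivot set h, then h arises from g by deleting one pivot or by
  replacing one pivot with a smaller index. Following the pivot sets through the cases, a
  nontrivial coincidence forces |f| <= |f \<inter> g| + 2 with the two largest indices of the
  symmetric difference of f and g on different sides.
*)

lemma odd_card_sym_diff:
  assumes "finite A" "finite B"
  shows "odd (card (sym_diff A B)) \<longleftrightarrow> odd (card A) \<noteq> odd (card B)"
proof -
  have "card (sym_diff A B) = card (A - B) + card (B - A)"
    using assms by (intro card_Un_disjoint) auto
  moreover have "card A = card (A - B) + card (A \<inter> B)" "card B = card (B - A) + card (A \<inter> B)"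
    using assms card_Int_Diff[of A B] card_Int_Diff[of B A] by (simp_all add: Int_commute)
  ultimately show ?thesis by auto
qed

lemma odd_card_sym_diff_Int:
  "finite Y \<Longrightarrow> odd (card (sym_diff L L' \<inter> Y)) \<longleftrightarrow> odd (card (L \<inter> Y)) \<noteq> odd (card (L' \<inter> Y))"
  using odd_card_sym_diff[of "L \<inter> Y" "L' \<inter> Y"] by (simp add: Int_Un_distrib2 Diff_Int_distrib2)

lemma odd_card_Int_insert:
  "finite Y \<Longrightarrow> n \<notin> Y \<Longrightarrow> odd (card (L \<inter> insert n Y)) \<longleftrightarrow> odd (card (L \<inter> Y)) \<noteq> (n \<in> L)"
  by (cases "n \<in> L") (simp_all add: Int_insert_right)

lemma family_eqI:
  assumes "\<And>X. X \<in> S \<Longrightarrow> X \<subseteq> {..<n}" "\<And>X. X \<in> S' \<Longrightarrow> X \<subseteq> {..<n}"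
    and "\<And>Y. Y \<subseteq> {..<n} \<Longrightarrow> Y \<in> S \<longleftrightarrow> Y \<in> S'"
  shows "S = S'"
proof (rule set_eqI)
  fix X
  show "X \<in> S \<longleftrightarrow> X \<in> S'"
  proof (cases "X \<subseteq> {..<n}")
    case False
    then show ?thesis using assms(1,2) by auto
  qed (rule assms(3))
qed

lemma family_eqI_Suc:
  assumes "\<And>X. X \<in> S \<Longrightarrow> X \<subseteq> {..<Suc n}" "\<And>X. X \<in> S' \<Longrightarrow> X \<subseteq> {..<Suc n}"
    and "\<And>Y. Y \<subseteq> {..<n} \<Longrightarrow> (Y \<in> S \<longleftrightarrow> Y \<in> S') \<and> (insert n Y \<in> S \<longleftrightarrow> insert n Y \<in> S')"
  shows "S = S'"
proof (rule family_eqI[OF assms(1,2)])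
  fix X assume X: "X \<subseteq> {..<Suc n}"
  have Y: "X - {n} \<subseteq> {..<n}"
    using X by (auto simp: less_Suc_eq)
  show "X \<in> S \<longleftrightarrow> X \<in> S'"
  proof (cases "n \<in> X")
    case True
    then have "insert n (X - {n}) = X" by blast
    then show ?thesis using assms(3)[OF Y] by simp
  next
    case False
    then have "X - {n} = X" by simp
    then show ?thesis using assms(3)[OF Y] by simp
  qed
qed

section \<open>Polynomials as Boolean functions\<close>

(* The value of p at the 0/1-point with support X: a monomial is 1 there iff its indices lie in X. *)
definition poly_eval :: "rpoly \<Rightarrow> nat set \<Rightarrow> bool" where
  "poly_eval p X \<longleftrightarrow> odd (card {S \<in> p. S \<subseteq> X})"

lemma poly_eval_radd:
  assumes "finite p" "finite q"
  shows "poly_eval (radd p q) X \<longleftrightarrow> poly_eval p X \<noteq> poly_eval q X"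
proof -
  have "{S \<in> radd p q. S \<subseteq> X} = sym_diff {S \<in> p. S \<subseteq> X} {S \<in> q. S \<subseteq> X}"
    unfolding radd_def by auto
  then show ?thesis
    unfolding poly_eval_def using assms by (simp add: odd_card_sym_diff)
qed

lemma poly_eval_rmul:
  assumes "finite p" "finite q"
  shows "poly_eval (rmul p q) X \<longleftrightarrow> poly_eval p X \<and> poly_eval q X"
proof -
  \<comment> \<open>count the pairs of monomials below \<open>X\<close> according to their product\<close>
  define P where "P = {A \<in> p. A \<subseteq> X} \<times> {B \<in> q. B \<subseteq> X}"
  define fibre where "fibre S = {(A, B). A \<in> p \<and> B \<in> q \<and> A \<union> B = S}" for S
  define U where "U = (\<lambda>(A, B). A \<union> B) ` P"
  have fin: "finite P" "finite U"
    using assms by (simp_all add: P_def U_def)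
  have "card P = (\<Sum>S\<in>U. card {x \<in> P. (\<lambda>(A, B). A \<union> B) x = S})"
    using sum.group[OF fin, of "\<lambda>(A, B). A \<union> B" "\<lambda>_. 1::nat"]
    by (simp add: U_def)
  also have "\<dots> = (\<Sum>S\<in>U. card (fibre S))"
    by (intro sum.cong refl arg_cong[where f = card]) (auto simp: U_def P_def fibre_def)
  finally have "odd (card P) \<longleftrightarrow> odd (card {S \<in> U. odd (card (fibre S))})"
    using fin by (simp add: even_sum_iff)
  moreover have "{S \<in> U. odd (card (fibre S))} = {S \<in> rmul p q. S \<subseteq> X}"
  proof -
    have "fibre S \<noteq> {}" if "odd (card (fibre S))" for S
      using that by auto
    then show ?thesis
      unfolding U_def P_def rmul_def fibre_def by fastforce
  qed
  ultimately show ?thesis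
    unfolding poly_eval_def P_def by (simp add: card_cartesian_product)
qed

lemma poly_eval_singleton: "poly_eval {S} X \<longleftrightarrow> S \<subseteq> X"
proof -
  have "{T \<in> {S}. T \<subseteq> X} = (if S \<subseteq> X then {S} else {})"
    by auto
  then show ?thesis
    unfolding poly_eval_def by simp
qed

lemma poly_eval_singletons:
  assumes "finite K"
  shows "poly_eval ((\<lambda>j. {j}) ` K) X \<longleftrightarrow> odd (card (K \<inter> X))"
proof -
  have "{S \<in> (\<lambda>j. {j}) ` K. S \<subseteq> X} = (\<lambda>j. {j}) ` (K \<inter> X)"
    by auto
  then show ?thesis
    unfolding poly_eval_def by (simp add: card_image)
qed

lemma finite_rmul:
  assumes "finite p" "finite q"
  shows "finite (rmul p q)"
proof (rule finite_subset)
  show "rmul p q \<subseteq> (\<lambda>(A, B). A \<union> B) ` (p \<times> q)"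
    unfolding rmul_def by (force dest: odd_card_imp_not_empty)
qed (use assms in simp)

lemma finite_rprod_list: "(\<And>p. p \<in> set ps \<Longrightarrow> finite p) \<Longrightarrow> finite (rprod_list ps)"
  by (induction ps) (simp_all add: rprod_list_def rone_def finite_rmul)

lemma poly_eval_rprod_list:
  "(\<And>p. p \<in> set ps \<Longrightarrow> finite p) \<Longrightarrow> poly_eval (rprod_list ps) X \<longleftrightarrow> (\<forall>p\<in>set ps. poly_eval p X)"
proof (induction ps)
  case Nil
  then show ?case
    by (simp add: rprod_list_def rone_def poly_eval_singleton)
next
  case (Cons p ps)
  then have "finite (rprod_list ps)"
    by (simp add: finite_rprod_list)
  with Cons show ?case
    by (simp add: rprod_list_def poly_eval_rmul)
qed

lemma poly_eval_inject:
  assumes "finite p" "finite q" and eval_eq: "\<And>X. poly_eval p X \<longleftrightarrow> poly_eval q X"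
  shows "p = q"
proof (rule ccontr)
  assume "p \<noteq> q"
  then have "sym_diff p q \<noteq> {}" by blast
  then obtain S where "S \<in> sym_diff p q" "\<forall>T\<in>sym_diff p q. T \<subseteq> S \<longrightarrow> T = S"
    using finite_has_minimal[of "sym_diff p q"] assms(1,2) by auto
  \<comment> \<open>\<open>S\<close> is the only monomial of \<open>p + q\<close> below \<open>S\<close>, so \<open>p + q\<close> does not vanish at \<open>S\<close>\<close>
  then have "{T \<in> radd p q. T \<subseteq> S} = {S}"
    unfolding radd_def by blast
  then have "poly_eval (radd p q) S"
    unfolding poly_eval_def by simp
  then show False
    using eval_eq[of S] assms(1,2) by (simp add: poly_eval_radd)
qed

section \<open>Triangular flats\<close>

(* The value that x_i + sum_{j<i} b_{ij} x_j + e_i = 1 forces on x_i at the point with support X. *)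
definition tri_rhs :: "(nat \<Rightarrow> nat \<Rightarrow> bool) \<Rightarrow> (nat \<Rightarrow> bool) \<Rightarrow> nat \<Rightarrow> nat set \<Rightarrow> bool" where
  "tri_rhs B e i X \<longleftrightarrow> odd (card ({j. j < i \<and> B i j} \<inter> X)) = e i"

(* The support of lta_act (B, e) u within {..<n}: an affine flat whose pivot coordinates u
   are determined by the lower ones. *)
definition tflat :: "nat \<Rightarrow> (nat \<Rightarrow> nat \<Rightarrow> bool) \<Rightarrow> (nat \<Rightarrow> bool) \<Rightarrow> nat set \<Rightarrow> nat set set" where
  "tflat n B e u = {X. X \<subseteq> {..<n} \<and> (\<forall>i\<in>u. i \<in> X \<longleftrightarrow> tri_rhs B e i X)}"

lemma tri_rhs_cong: "X \<inter> {..<i} = X' \<inter> {..<i} \<Longrightarrow> tri_rhs B e i X = tri_rhs B e i X'"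
proof -
  assume "X \<inter> {..<i} = X' \<inter> {..<i}"
  then have "{j. j < i \<and> B i j} \<inter> X = {j. j < i \<and> B i j} \<inter> X'"
    by blast
  then show ?thesis
    unfolding tri_rhs_def by simp
qed

lemma finite_lta_var: "finite (lta_var B e i)"
proof -
  have "{{j} |j. j < i \<and> B i j} = (\<lambda>j. {j}) ` {j. j < i \<and> B i j}"
    by auto
  then show ?thesis
    unfolding lta_var_def by simp
qed

lemma poly_eval_lta_var: "poly_eval (lta_var B e i) X \<longleftrightarrow> (i \<in> X \<longleftrightarrow> tri_rhs B e i X)"
proof -
  define K where "K = {j. j < i \<and> B i j}"
  define C where "C = (if e i then {{}} else ({} :: rpoly))"
  have "lta_var B e i = radd (radd {{i}} ((\<lambda>j. {j}) ` K)) C"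
    unfolding lta_var_def radd_def K_def C_def by auto
  moreover have "poly_eval C X \<longleftrightarrow> e i"
    unfolding C_def using poly_eval_singleton[of "{}" X] by (simp add: poly_eval_def)
  moreover have "finite K" "finite C" "finite (radd {{i}} ((\<lambda>j. {j}) ` K))"
    unfolding K_def C_def radd_def by simp_all
  ultimately show ?thesis
    unfolding tri_rhs_def K_def[symmetric]
    by (simp add: poly_eval_radd poly_eval_singleton poly_eval_singletons) blast
qed

lemma poly_eval_lta_act:
  assumes "finite u"
  shows "poly_eval (lta_act (B, e) u) X \<longleftrightarrow> (\<forall>i\<in>u. i \<in> X \<longleftrightarrow> tri_rhs B e i X)"
proof -
  have "poly_eval (rprod_list (map (lta_var B e) (sorted_list_of_set u))) X
      \<longleftrightarrow> (\<forall>p\<in>lta_var B e ` u. poly_eval p X)"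
    using assms by (subst poly_eval_rprod_list) (auto simp: finite_lta_var)
  then show ?thesis
    unfolding lta_act_def by (simp add: poly_eval_lta_var)
qed

lemma finite_lta_act: "finite (lta_act Be u)"
  unfolding lta_act_def by (rule finite_rprod_list) (auto simp: finite_lta_var)

lemma poly_eval_lta_act_tflat:
  assumes "u \<subseteq> {..<m}"
  shows "poly_eval (lta_act (B, e) u) X \<longleftrightarrow> X \<inter> {..<m} \<in> tflat m B e u"
proof -
  have "tri_rhs B e i (X \<inter> {..<m}) = tri_rhs B e i X" if "i \<in> u" for i
    using that assms by (intro tri_rhs_cong) auto
  moreover have "finite u"
    using assms finite_subset by blast
  ultimately show ?thesis
    unfolding tflat_def using assms by (auto simp: poly_eval_lta_act)
qed

lemma tflat_determines_lta_act:
  assumes "u \<subseteq> {..<m}" and "tflat m B e u = tflat m B' e' u"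
  shows "lta_act (B, e) u = lta_act (B', e') u"
  using assms by (intro poly_eval_inject finite_lta_act) (simp add: poly_eval_lta_act_tflat)

lemma tflat_subset: "X \<in> tflat n B e u \<Longrightarrow> X \<subseteq> {..<n}"
  unfolding tflat_def by auto

lemma tflat_fun_upd: "i \<notin> u \<Longrightarrow> tflat n (B(i := r)) (e(i := c)) u = tflat n B e u"
  unfolding tflat_def tri_rhs_def by auto

lemma mem_tflat_Suc_lower:
  assumes "u \<subseteq> {..<Suc n}" "Y \<subseteq> {..<n}"
  shows "Y \<in> tflat (Suc n) B e u \<longleftrightarrow> Y \<in> tflat n B e (u - {n}) \<and> (n \<in> u \<longrightarrow> \<not> tri_rhs B e n Y)"
  using assms unfolding tflat_def by auto

lemma mem_tflat_Suc_upper: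
  assumes "u \<subseteq> {..<Suc n}" "Y \<subseteq> {..<n}"
  shows "insert n Y \<in> tflat (Suc n) B e u \<longleftrightarrow> Y \<in> tflat n B e (u - {n}) \<and> (n \<in> u \<longrightarrow> tri_rhs B e n Y)"
proof -
  have "tri_rhs B e i (insert n Y) = tri_rhs B e i Y" if "i \<in> u" for i
    using that assms by (intro tri_rhs_cong) (auto simp: less_Suc_eq)
  then show ?thesis
    using assms unfolding tflat_def by auto
qed

lemma tflat_Suc_eqI:
  assumes "u \<subseteq> {..<Suc n}" "\<And>X. X \<in> E \<Longrightarrow> X \<subseteq> {..<Suc n}"
    and "\<And>Y. Y \<subseteq> {..<n} \<Longrightarrow>
      Y \<in> E \<longleftrightarrow> Y \<in> tflat n B e (u - {n}) \<and> (n \<in> u \<longrightarrow> \<not> tri_rhs B e n Y)"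
    and "\<And>Y. Y \<subseteq> {..<n} \<Longrightarrow>
      insert n Y \<in> E \<longleftrightarrow> Y \<in> tflat n B e (u - {n}) \<and> (n \<in> u \<longrightarrow> tri_rhs B e n Y)"
  shows "E = tflat (Suc n) B e u"
proof (rule family_eqI_Suc[of _ n])
  fix Y assume Y: "Y \<subseteq> {..<n}"
  show "(Y \<in> E \<longleftrightarrow> Y \<in> tflat (Suc n) B e u) \<and> (insert n Y \<in> E \<longleftrightarrow> insert n Y \<in> tflat (Suc n) B e u)"
    using assms(3,4)[OF Y] mem_tflat_Suc_lower[OF assms(1) Y] mem_tflat_Suc_upper[OF assms(1) Y]
    by simp
qed (simp_all add: assms(2) tflat_subset)

lemma tflat_Suc_eq_if_rows_agree:
  assumes u: "u \<subseteq> {..<Suc n}" and lower: "tflat n B e (u - {n}) = tflat n B' e' (u - {n})"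
    and row: "\<And>Y. n \<in> u \<Longrightarrow> Y \<in> tflat n B e (u - {n}) \<Longrightarrow> tri_rhs B e n Y = tri_rhs B' e' n Y"
  shows "tflat (Suc n) B e u = tflat (Suc n) B' e' u"
proof (rule tflat_Suc_eqI[OF u])
  fix Y assume "Y \<subseteq> {..<n}"
  then show "Y \<in> tflat (Suc n) B e u \<longleftrightarrow> Y \<in> tflat n B' e' (u - {n}) \<and> (n \<in> u \<longrightarrow> \<not> tri_rhs B' e' n Y)"
    and "insert n Y \<in> tflat (Suc n) B e u \<longleftrightarrow> Y \<in> tflat n B' e' (u - {n}) \<and> (n \<in> u \<longrightarrow> tri_rhs B' e' n Y)"
    using mem_tflat_Suc_lower[OF u] mem_tflat_Suc_upper[OF u] lower row by auto
qed (rule tflat_subset)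

lemma tflat_extend:
  assumes "u \<subseteq> {..<Suc n}" "Y \<in> tflat n B e (u - {n})"
  shows "(if n \<in> u \<and> tri_rhs B e n Y then insert n Y else Y) \<in> tflat (Suc n) B e u"
proof -
  have "Y \<subseteq> {..<n}"
    using assms(2) by (rule tflat_subset)
  then show ?thesis
    using assms(2) mem_tflat_Suc_lower[OF assms(1)] mem_tflat_Suc_upper[OF assms(1)] by simp
qed

lemma tflat_nonempty: "u \<subseteq> {..<n} \<Longrightarrow> tflat n B e u \<noteq> {}"
proof (induction n arbitrary: u)
  case 0
  then have "{} \<in> tflat 0 B e u"
    unfolding tflat_def by auto
  then show ?case by blast
next
  case (Suc n)
  then have "u - {n} \<subseteq> {..<n}"
    by auto
  then obtain Y where "Y \<in> tflat n B e (u - {n})"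
    using Suc.IH by blast
  then show ?case
    using tflat_extend[OF Suc.prems] by blast
qed

lemma tflat_pivots_mono:
  "u \<subseteq> {..<n} \<Longrightarrow> v \<subseteq> {..<n} \<Longrightarrow> tflat n B e u \<subseteq> tflat n B' e' v \<Longrightarrow> v \<subseteq> u"
proof (induction n arbitrary: u v)
  case 0
  then show ?case by simp
next
  case (Suc n)
  have lower: "u - {n} \<subseteq> {..<n}" "v - {n} \<subseteq> {..<n}"
    using Suc.prems(1,2) by auto
  have "tflat n B e (u - {n}) \<subseteq> tflat n B' e' (v - {n})"
  proof
    fix Y assume Y: "Y \<in> tflat n B e (u - {n})"
    then have "Y \<subseteq> {..<n}"
      by (rule tflat_subset)
    moreover have "(if n \<in> u \<and> tri_rhs B e n Y then insert n Y else Y) \<in> tflat (Suc n) B' e' v"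
      using tflat_extend[OF Suc.prems(1) Y] Suc.prems(3) by blast
    ultimately show "Y \<in> tflat n B' e' (v - {n})"
      using mem_tflat_Suc_lower[OF Suc.prems(2)] mem_tflat_Suc_upper[OF Suc.prems(2)]
      by (auto split: if_splits)
  qed
  then have "v - {n} \<subseteq> u - {n}"
    using Suc.IH[OF lower] by blast
  \<comment> \<open>a non-pivot coordinate \<open>n\<close> is free: the flat contains \<open>Y\<close> together with \<open>insert n Y\<close>\<close>
  moreover have "n \<in> u" if "n \<in> v"
  proof (rule ccontr)
    assume "n \<notin> u"
    obtain Y where Y: "Y \<in> tflat n B e (u - {n})"
      using tflat_nonempty[OF lower(1)] by blast
    then have "Y \<subseteq> {..<n}"
      by (rule tflat_subset)
    then have "Y \<in> tflat (Suc n) B e u" "insert n Y \<in> tflat (Suc n) B e u"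
      using Y \<open>n \<notin> u\<close> mem_tflat_Suc_lower[OF Suc.prems(1)] mem_tflat_Suc_upper[OF Suc.prems(1)]
      by auto
    then show False
      using Suc.prems(3) \<open>n \<in> v\<close> \<open>Y \<subseteq> {..<n}\<close>
        mem_tflat_Suc_lower[OF Suc.prems(2)] mem_tflat_Suc_upper[OF Suc.prems(2)] by blast
  qed
  ultimately show ?case by blast
qed

lemma tflat_pivots_unique:
  "u \<subseteq> {..<n} \<Longrightarrow> v \<subseteq> {..<n} \<Longrightarrow> tflat n B e u = tflat n B' e' v \<Longrightarrow> u = v"
  using tflat_pivots_mono[of u n v B e B' e'] tflat_pivots_mono[of v n u B' e' B e] by auto

section \<open>Hyperplane sections of flats\<close>

definition tflat_section ::
    "nat \<Rightarrow> (nat \<Rightarrow> nat \<Rightarrow> bool) \<Rightarrow> (nat \<Rightarrow> bool) \<Rightarrow> nat set \<Rightarrow> nat set set \<Rightarrow> bool" where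
  "tflat_section n B e u E \<longleftrightarrow> E = {} \<or> E = tflat n B e u \<or>
     (\<exists>s B' e'. s < n \<and> s \<notin> u \<and> E = tflat n B' e' (insert s u))"

lemma tflat_section_Suc:
  assumes u: "u \<subseteq> {..<Suc n}" and E: "\<And>X. X \<in> E \<Longrightarrow> X \<subseteq> {..<Suc n}"
    and lower: "\<And>Y. Y \<subseteq> {..<n} \<Longrightarrow> Y \<in> E \<longleftrightarrow> Y \<in> E0 \<and> (n \<in> u \<longrightarrow> \<not> tri_rhs B e n Y)"
    and upper: "\<And>Y. Y \<subseteq> {..<n} \<Longrightarrow> insert n Y \<in> E \<longleftrightarrow> Y \<in> E0 \<and> (n \<in> u \<longrightarrow> tri_rhs B e n Y)"
    and E0: "tflat_section n B e (u - {n}) E0"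
  shows "tflat_section (Suc n) B e u E"
  using E0[unfolded tflat_section_def]
proof (elim disjE exE conjE)
  assume "E0 = {}"
  then have "E = {}"
    using lower upper by (intro family_eqI_Suc[of _ n]) (simp_all add: E)
  then show ?thesis unfolding tflat_section_def by blast
next
  assume "E0 = tflat n B e (u - {n})"
  then have "E = tflat (Suc n) B e u"
    using lower upper by (intro tflat_Suc_eqI u) (simp_all add: E)
  then show ?thesis unfolding tflat_section_def by blast
next
  fix s B' e' assume s: "s < n" "s \<notin> u - {n}" and E0: "E0 = tflat n B' e' (insert s (u - {n}))"
  \<comment> \<open>the new flat takes its row \<open>n\<close> from \<open>(B, e)\<close> and its lower rows from \<open>(B', e')\<close>\<close>
  define B'' where "B'' = B'(n := B n)"
  define e'' where "e'' = e'(n := e n)"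
  have "insert s u - {n} = insert s (u - {n})" "n \<in> insert s u \<longleftrightarrow> n \<in> u"
    using s by auto
  moreover have "tflat n B'' e'' (insert s (u - {n})) = E0"
    unfolding B''_def e''_def E0 using s by (intro tflat_fun_upd) simp
  moreover have "tri_rhs B'' e'' n = tri_rhs B e n"
    unfolding B''_def e''_def tri_rhs_def by simp
  moreover have "insert s u \<subseteq> {..<Suc n}"
    using u s by auto
  ultimately have "E = tflat (Suc n) B'' e'' (insert s u)"
    using lower upper by (intro tflat_Suc_eqI) (simp_all add: E)
  moreover have "s < Suc n" "s \<notin> u"
    using s by auto
  ultimately show ?thesis unfolding tflat_section_def by blast
qed

lemma mem_tflat_Int_hyperplane_Suc:
  assumes "u \<subseteq> {..<Suc n}" "Y \<subseteq> {..<n}"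
  shows "Y \<in> tflat (Suc n) B e u \<inter> {Y. odd (card (L \<inter> Y)) = c} \<longleftrightarrow>
      Y \<in> tflat n B e (u - {n}) \<and> (n \<in> u \<longrightarrow> \<not> tri_rhs B e n Y) \<and> odd (card (L \<inter> Y)) = c"
    and "insert n Y \<in> tflat (Suc n) B e u \<inter> {Y. odd (card (L \<inter> Y)) = c} \<longleftrightarrow>
      Y \<in> tflat n B e (u - {n}) \<and> (n \<in> u \<longrightarrow> tri_rhs B e n Y) \<and> (odd (card (L \<inter> Y)) \<noteq> (n \<in> L)) = c"
proof -
  have "finite Y" "n \<notin> Y"
    using assms(2) finite_subset by auto
  then show "Y \<in> tflat (Suc n) B e u \<inter> {Y. odd (card (L \<inter> Y)) = c} \<longleftrightarrow>
      Y \<in> tflat n B e (u - {n}) \<and> (n \<in> u \<longrightarrow> \<not> tri_rhs B e n Y) \<and> odd (card (L \<inter> Y)) = c"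
    and "insert n Y \<in> tflat (Suc n) B e u \<inter> {Y. odd (card (L \<inter> Y)) = c} \<longleftrightarrow>
      Y \<in> tflat n B e (u - {n}) \<and> (n \<in> u \<longrightarrow> tri_rhs B e n Y) \<and> (odd (card (L \<inter> Y)) \<noteq> (n \<in> L)) = c"
    using mem_tflat_Suc_lower[OF assms] mem_tflat_Suc_upper[OF assms] by (simp_all add: odd_card_Int_insert)
qed

lemma tflat_Int_hyperplane_new_pivot:
  assumes u: "u \<subseteq> {..<Suc n}" "n \<notin> u" and "n \<in> L"
  shows "tflat (Suc n) B e u \<inter> {Y. odd (card (L \<inter> Y)) = c}
    = tflat (Suc n) (B(n := (\<lambda>j. j \<in> L))) (e(n := \<not> c)) (insert n u)"
proof -
  define B' where "B' = B(n := (\<lambda>j. j \<in> L))"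
  define e' where "e' = e(n := \<not> c)"
  have row: "tri_rhs B' e' n Y \<longleftrightarrow> odd (card (L \<inter> Y)) \<noteq> c" if "Y \<subseteq> {..<n}" for Y
  proof -
    have "{j. j < n \<and> B' n j} \<inter> Y = L \<inter> Y"
      unfolding B'_def using that by auto
    then show ?thesis
      unfolding tri_rhs_def e'_def by simp
  qed
  have lower: "tflat n B' e' (insert n u - {n}) = tflat n B e (u - {n})"
    unfolding B'_def e'_def using u(2) by (simp add: tflat_fun_upd)
  show ?thesis
    unfolding B'_def[symmetric] e'_def[symmetric]
  proof (rule tflat_Suc_eqI)
    show "insert n u \<subseteq> {..<Suc n}"
      using u(1) by auto
    fix Y assume Y: "Y \<subseteq> {..<n}"
    show "Y \<in> tflat (Suc n) B e u \<inter> {Y. odd (card (L \<inter> Y)) = c} \<longleftrightarrow>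
        Y \<in> tflat n B' e' (insert n u - {n}) \<and> (n \<in> insert n u \<longrightarrow> \<not> tri_rhs B' e' n Y)"
      using mem_tflat_Int_hyperplane_Suc(1)[OF u(1) Y, of B e L c] row[OF Y] lower u(2) by (cases c) simp_all
    show "insert n Y \<in> tflat (Suc n) B e u \<inter> {Y. odd (card (L \<inter> Y)) = c} \<longleftrightarrow>
        Y \<in> tflat n B' e' (insert n u - {n}) \<and> (n \<in> insert n u \<longrightarrow> tri_rhs B' e' n Y)"
      using mem_tflat_Int_hyperplane_Suc(2)[OF u(1) Y, of B e L c] row[OF Y] lower u(2) \<open>n \<in> L\<close> by (cases c) simp_all
  qed (auto dest: tflat_subset)
qed

lemma tflat_section_hyperplane:
  "u \<subseteq> {..<n} \<Longrightarrow> tflat_section n B e u (tflat n B e u \<inter> {Y. odd (card (L \<inter> Y)) = c})"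
proof (induction n arbitrary: u L c)
  case 0
  then have "tflat 0 B e u = {{}}"
    unfolding tflat_def by auto
  then show ?case
    unfolding tflat_section_def by (cases c) auto
next
  case (Suc n)
  note lower = mem_tflat_Int_hyperplane_Suc(1)[OF Suc.prems]
    and upper = mem_tflat_Int_hyperplane_Suc(2)[OF Suc.prems]
  show ?case
  proof (cases "n \<notin> u \<and> n \<in> L")
    case True
    \<comment> \<open>the hyperplane involves the free coordinate \<open>n\<close>, which becomes a new pivot\<close>
    then show ?thesis
      using tflat_Int_hyperplane_new_pivot[OF Suc.prems] unfolding tflat_section_def by blast
  next
    case False
    \<comment> \<open>on each half of the flat the hyperplane is one in the coordinates below \<open>n\<close>\<close>
    define L' where "L' = (if n \<in> L then sym_diff L {j. j < n \<and> B n j} else L)"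
    define c' where "c' = (if n \<in> L then c = e n else c)"
    define E0 where "E0 = tflat n B e (u - {n}) \<inter> {Y. odd (card (L' \<inter> Y)) = c'}"
    have u': "u - {n} \<subseteq> {..<n}"
      using Suc.prems by auto
    have parity: "odd (card (L' \<inter> Y)) = c' \<longleftrightarrow>
        (if n \<in> L then (odd (card (L \<inter> Y)) \<noteq> tri_rhs B e n Y) = c else odd (card (L \<inter> Y)) = c)"
      if "Y \<subseteq> {..<n}" for Y
      using odd_card_sym_diff_Int[of Y L "{j. j < n \<and> B n j}"] finite_subset[OF that]
      unfolding L'_def c'_def tri_rhs_def by auto
    show ?thesis
    proof (rule tflat_section_Suc[OF Suc.prems])
      show "tflat_section n B e (u - {n}) E0"
        unfolding E0_def by (rule Suc.IH[OF u'])
      fix Y assume Y: "Y \<subseteq> {..<n}"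
      show "Y \<in> tflat (Suc n) B e u \<inter> {Y. odd (card (L \<inter> Y)) = c} \<longleftrightarrow>
          Y \<in> E0 \<and> (n \<in> u \<longrightarrow> \<not> tri_rhs B e n Y)"
        using lower[OF Y] parity[OF Y] False unfolding E0_def by auto
      show "insert n Y \<in> tflat (Suc n) B e u \<inter> {Y. odd (card (L \<inter> Y)) = c} \<longleftrightarrow>
          Y \<in> E0 \<and> (n \<in> u \<longrightarrow> tri_rhs B e n Y)"
        using upper[OF Y] parity[OF Y] False unfolding E0_def by auto
    qed (auto dest: tflat_subset)
  qed
qed

lemma tflat_section_disagreement:
  assumes "u \<subseteq> {..<n}"
  shows "tflat_section n B e u {Y \<in> tflat n B e u. tri_rhs C d n Y \<noteq> tri_rhs C' d' n Y}"
proof -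
  define L where "L = sym_diff {j. j < n \<and> C n j} {j. j < n \<and> C' n j}"
  have "tri_rhs C d n Y \<noteq> tri_rhs C' d' n Y \<longleftrightarrow> odd (card (L \<inter> Y)) = (d n = d' n)"
    if "Y \<in> tflat n B e u" for Y
  proof -
    have "finite Y"
      using tflat_subset[OF that] finite_subset by blast
    then show ?thesis
      unfolding L_def tri_rhs_def by (simp add: odd_card_sym_diff_Int) blast
  qed
  then have "{Y \<in> tflat n B e u. tri_rhs C d n Y \<noteq> tri_rhs C' d' n Y}
      = tflat n B e u \<inter> {Y. odd (card (L \<inter> Y)) = (d n = d' n)}"
    by blast
  then show ?thesis
    using tflat_section_hyperplane[OF assms] by simp
qed

section \<open>Symmetric differences of flats\<close>

lemma mem_sym_diff_tflat_Suc:
  assumes "u \<subseteq> {..<Suc n}" "Y \<subseteq> {..<n}"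
  shows "Y \<in> sym_diff (tflat (Suc n) B e u) (tflat (Suc n) B' e' u) \<longleftrightarrow>
      (Y \<in> tflat n B e (u - {n}) \<and> (n \<in> u \<longrightarrow> \<not> tri_rhs B e n Y))
      \<noteq> (Y \<in> tflat n B' e' (u - {n}) \<and> (n \<in> u \<longrightarrow> \<not> tri_rhs B' e' n Y))"
    and "insert n Y \<in> sym_diff (tflat (Suc n) B e u) (tflat (Suc n) B' e' u) \<longleftrightarrow>
      (Y \<in> tflat n B e (u - {n}) \<and> (n \<in> u \<longrightarrow> tri_rhs B e n Y))
      \<noteq> (Y \<in> tflat n B' e' (u - {n}) \<and> (n \<in> u \<longrightarrow> tri_rhs B' e' n Y))"
  unfolding Un_iff Diff_iff mem_tflat_Suc_lower[OF assms] mem_tflat_Suc_upper[OF assms] by blast+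

definition pivot_step :: "nat set \<Rightarrow> nat set \<Rightarrow> bool" where
  "pivot_step g h \<longleftrightarrow> (h \<subseteq> g \<and> card h + 1 = card g) \<or>
     (\<exists>a b. a < b \<and> a \<in> h - g \<and> b \<in> g - h \<and> h - {a} = g - {b})"

lemma pivot_step_insert:
  assumes "finite g" "finite h" "n \<in> g" "n \<in> h" "pivot_step (g - {n}) (h - {n})"
  shows "pivot_step g h"
  using assms(5) unfolding pivot_step_def
proof (elim disjE exE conjE)
  assume "h - {n} \<subseteq> g - {n}" "card (h - {n}) + 1 = card (g - {n})"
  moreover have "card (g - {n}) + 1 = card g" "card (h - {n}) + 1 = card h"
    using card_Suc_Diff1[OF assms(1,3)] card_Suc_Diff1[OF assms(2,4)] by simp_all
  ultimately have "h \<subseteq> g \<and> card h + 1 = card g"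
    using assms(3) by auto
  then show "h \<subseteq> g \<and> card h + 1 = card g \<or> (\<exists>a b. a < b \<and> a \<in> h - g \<and> b \<in> g - h \<and> h - {a} = g - {b})" ..
next
  fix a b assume ab: "a < b" "a \<in> h - {n} - (g - {n})" "b \<in> g - {n} - (h - {n})"
    "h - {n} - {a} = g - {n} - {b}"
  then have "h - {a} = g - {b}"
    using assms(3,4) by blast
  then show "h \<subseteq> g \<and> card h + 1 = card g \<or> (\<exists>a b. a < b \<and> a \<in> h - g \<and> b \<in> g - h \<and> h - {a} = g - {b})"
    using ab by blast
qed

lemma sym_diff_tflat_eq_tflat_SucD:
  assumes g: "g \<subseteq> {..<Suc n}" and h: "h \<subseteq> {..<Suc n}" and Y: "Y \<subseteq> {..<n}"
    and eq: "sym_diff (tflat (Suc n) B1 e1 g) (tflat (Suc n) B2 e2 g) = tflat (Suc n) B e h"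
  shows "((Y \<in> tflat n B1 e1 (g - {n}) \<and> (n \<in> g \<longrightarrow> \<not> tri_rhs B1 e1 n Y))
        \<noteq> (Y \<in> tflat n B2 e2 (g - {n}) \<and> (n \<in> g \<longrightarrow> \<not> tri_rhs B2 e2 n Y)))
      \<longleftrightarrow> Y \<in> tflat n B e (h - {n}) \<and> (n \<in> h \<longrightarrow> \<not> tri_rhs B e n Y)"
    and "((Y \<in> tflat n B1 e1 (g - {n}) \<and> (n \<in> g \<longrightarrow> tri_rhs B1 e1 n Y))
        \<noteq> (Y \<in> tflat n B2 e2 (g - {n}) \<and> (n \<in> g \<longrightarrow> tri_rhs B2 e2 n Y)))
      \<longleftrightarrow> Y \<in> tflat n B e (h - {n}) \<and> (n \<in> h \<longrightarrow> tri_rhs B e n Y)"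
  using mem_sym_diff_tflat_Suc[OF g Y, of B1 e1 B2 e2, unfolded eq]
    mem_tflat_Suc_lower[OF h Y] mem_tflat_Suc_upper[OF h Y] by simp_all

lemma pivot_step_drop_top:
  assumes g: "g \<subseteq> {..<Suc n}" "n \<in> g" and h: "h \<subseteq> {..<Suc n}" "n \<notin> h"
    and eq: "sym_diff (tflat (Suc n) B1 e1 g) (tflat (Suc n) B2 e2 g) = tflat (Suc n) B e h"
  shows "pivot_step g h"
proof -
  have g': "g - {n} \<subseteq> {..<n}" and h': "h \<subseteq> {..<n}"
    using g h by (auto simp: less_Suc_eq)
  have "finite g"
    using g finite_subset by blast
  have card_g: "card (g - {n}) + 1 = card g"
    using card_Suc_Diff1[OF \<open>finite g\<close> g(2)] by simp
  \<comment> \<open>below \<open>n\<close> the two flats agree, and \<open>h\<close> is the pivot set of the locus where their \<open>n\<close>-th rows disagree\<close>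
  have disagree: "tflat n B e h = {Y \<in> tflat n B1 e1 (g - {n}). tri_rhs B1 e1 n Y \<noteq> tri_rhs B2 e2 n Y}"
  proof (rule family_eqI[of _ n])
    fix Y assume Y: "Y \<subseteq> {..<n}"
    show "Y \<in> tflat n B e h \<longleftrightarrow> Y \<in> {Y \<in> tflat n B1 e1 (g - {n}). tri_rhs B1 e1 n Y \<noteq> tri_rhs B2 e2 n Y}"
      using sym_diff_tflat_eq_tflat_SucD[OF g(1) h(1) Y eq] g(2) h(2) by auto
  qed (auto dest: tflat_subset)
  from tflat_section_disagreement[OF g', where B=B1 and e=e1 and C=B1 and d=e1 and C'=B2 and d'=e2]
  show ?thesis
    unfolding tflat_section_def disagree[symmetric]
  proof (elim disjE exE conjE)
    assume "tflat n B e h = {}"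
    then show ?thesis
      using tflat_nonempty[OF h'] by simp
  next
    assume "tflat n B e h = tflat n B1 e1 (g - {n})"
    then have "h = g - {n}"
      using tflat_pivots_unique[OF h' g'] by blast
    then show ?thesis
      using card_g unfolding pivot_step_def by blast
  next
    fix s B' e' assume s: "s < n" "s \<notin> g - {n}" "tflat n B e h = tflat n B' e' (insert s (g - {n}))"
    then have "h = insert s (g - {n})"
      using tflat_pivots_unique[OF h'] g' by blast
    then have "s < n \<and> s \<in> h - g \<and> n \<in> g - h \<and> h - {s} = g - {n}"
      using s g(2) by auto
    then show ?thesis
      unfolding pivot_step_def by blast
  qed
qed

lemma sym_diff_tflat_eq_tflat_lower:
  assumes g: "g \<subseteq> {..<Suc n}" and h: "h \<subseteq> {..<Suc n}" and "n \<in> g \<longleftrightarrow> n \<in> h"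
    and eq: "sym_diff (tflat (Suc n) B1 e1 g) (tflat (Suc n) B2 e2 g) = tflat (Suc n) B e h"
  shows "sym_diff (tflat n B1 e1 (g - {n})) (tflat n B2 e2 (g - {n})) = tflat n B e (h - {n})"
proof (rule family_eqI[of _ n])
  fix Y assume Y: "Y \<subseteq> {..<n}"
  show "Y \<in> sym_diff (tflat n B1 e1 (g - {n})) (tflat n B2 e2 (g - {n})) \<longleftrightarrow> Y \<in> tflat n B e (h - {n})"
    using sym_diff_tflat_eq_tflat_SucD[OF g h Y eq] \<open>n \<in> g \<longleftrightarrow> n \<in> h\<close> by (cases "n \<in> g") auto
qed (auto dest: tflat_subset)

lemma sym_diff_tflat_top_pivot:
  assumes g: "g \<subseteq> {..<Suc n}" and h: "h \<subseteq> {..<Suc n}" and "n \<in> h"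
    and eq: "sym_diff (tflat (Suc n) B1 e1 g) (tflat (Suc n) B2 e2 g) = tflat (Suc n) B e h"
  shows "n \<in> g"
proof (rule ccontr)
  assume "n \<notin> g"
  have "h - {n} \<subseteq> {..<n}"
    using h by auto
  then obtain Y where "Y \<in> tflat n B e (h - {n})"
    using tflat_nonempty by blast
  moreover from this have "Y \<subseteq> {..<n}"
    by (rule tflat_subset)
  \<comment> \<open>\<open>n\<close> is free in both flats on the left, so \<open>Y\<close> and \<open>insert n Y\<close> lie in the left side together\<close>
  ultimately show False
    using sym_diff_tflat_eq_tflat_SucD[OF g h _ eq] \<open>n \<notin> g\<close> \<open>n \<in> h\<close> by blast
qed

lemma sym_diff_tflat_pivot_step:
  assumes "g \<subseteq> {..<n}" "h \<subseteq> {..<n}" "sym_diff (tflat n B1 e1 g) (tflat n B2 e2 g) = tflat n B e h"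
  shows "pivot_step g h"
  using assms
proof (induction n arbitrary: g h B1 e1 B2 e2 B e)
  case 0
  then have "tflat 0 B1 e1 g = {{}}" "tflat 0 B2 e2 g = {{}}" "tflat 0 B e h = {{}}"
    unfolding tflat_def by auto
  then show ?case
    using "0.prems"(3) by simp
next
  case (Suc n)
  note g = Suc.prems(1) and h = Suc.prems(2) and eq = Suc.prems(3)
  have "finite g" "finite h"
    using g h finite_subset by blast+
  have IH: "pivot_step (g - {n}) (h - {n})" if "n \<in> g \<longleftrightarrow> n \<in> h"
  proof (rule Suc.IH)
    show "g - {n} \<subseteq> {..<n}" "h - {n} \<subseteq> {..<n}"
      using g h by auto
  qed (rule sym_diff_tflat_eq_tflat_lower[OF g h that eq])
  consider "n \<in> g" "n \<in> h" | "n \<in> g" "n \<notin> h" | "n \<notin> g" "n \<notin> h"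
    using sym_diff_tflat_top_pivot[OF g h _ eq] by blast
  then show ?case
  proof cases
    case 1
    then show ?thesis
      using pivot_step_insert[OF \<open>finite g\<close> \<open>finite h\<close>] IH by blast
  next
    case 2
    then show ?thesis
      using pivot_step_drop_top[OF g _ h _ eq] by blast
  next
    case 3
    then show ?thesis
      using IH by simp
  qed
qed

section \<open>Exceptional pairs of pivot sets\<close>

definition top_two_same_side :: "nat set \<Rightarrow> nat set \<Rightarrow> bool" where
  "top_two_same_side f g \<longleftrightarrow> (\<exists>a b. a < b \<and> a \<in> sym_diff f g \<and> b \<in> sym_diff f g
     \<and> (\<forall>c \<in> sym_diff f g. c \<le> a \<or> c = b) \<and> ({a, b} \<subseteq> f \<or> {a, b} \<subseteq> g))"

definition exceptional_pair :: "nat set \<Rightarrow> nat set \<Rightarrow> bool" where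
  "exceptional_pair f g \<longleftrightarrow> \<not> top_two_same_side f g \<and> card f \<le> card (f \<inter> g) + 2"

lemma exceptional_pair_sym: "card f = card g \<Longrightarrow> exceptional_pair f g \<Longrightarrow> exceptional_pair g f"
  unfolding exceptional_pair_def top_two_same_side_def by (auto simp: Int_commute)

lemma exceptional_pair_if_card_Int:
  assumes "finite f" "finite g" "card f = card g" "card f \<le> card (f \<inter> g) + 1"
  shows "exceptional_pair f g"
proof -
  have "card f = card (f - g) + card (f \<inter> g)" "card g = card (g - f) + card (f \<inter> g)"
    using card_Int_Diff[OF assms(1), of g] card_Int_Diff[OF assms(2), of f] by (simp_all add: Int_commute)
  then have "card (f - g) \<le> 1" "card (g - f) \<le> 1"
    using assms(3,4) by linarith+
  then have "a = b" if "a \<in> f - g \<and> b \<in> f - g \<or> a \<in> g - f \<and> b \<in> g - f" for a b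
    using that assms(1,2) by (auto simp: card_le_Suc0_iff_eq)
  then have "\<not> top_two_same_side f g"
    unfolding top_two_same_side_def by fastforce
  then show ?thesis
    unfolding exceptional_pair_def using assms(4) by simp
qed

lemma exceptional_pair_insert:
  assumes "finite f" "t \<in> f" "t \<in> g" "exceptional_pair (f - {t}) (g - {t})"
  shows "exceptional_pair f g"
proof -
  have same_diff: "sym_diff (f - {t}) (g - {t}) = sym_diff f g"
    using assms(2,3) by auto
  have "top_two_same_side (f - {t}) (g - {t})" if "top_two_same_side f g"
    using that assms(2,3) unfolding top_two_same_side_def same_diff by blast
  moreover have "card ((f - {t}) \<inter> (g - {t})) + 1 = card (f \<inter> g)"
  proof -
    have "(f - {t}) \<inter> (g - {t}) = (f \<inter> g) - {t}" by auto
    then show ?thesis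
      using card_Suc_Diff1[of "f \<inter> g" t] assms(1-3) by simp
  qed
  moreover have "card (f - {t}) + 1 = card f"
    using card_Suc_Diff1[OF assms(1,2)] by simp
  ultimately show ?thesis
    using assms(4) unfolding exceptional_pair_def by auto
qed

lemma not_top_two_same_side:
  assumes "\<forall>x \<in> f \<union> g. x \<le> n" "n \<in> f" "n \<notin> g" "b \<in> g - f" "\<forall>x \<in> f - g. x = n \<or> x < b"
  shows "\<not> top_two_same_side f g"
proof
  assume "top_two_same_side f g"
  then obtain a' b' where ab': "a' < b'" "a' \<in> sym_diff f g" "b' \<in> sym_diff f g"
    "\<forall>c \<in> sym_diff f g. c \<le> a' \<or> c = b'" "{a', b'} \<subseteq> f \<or> {a', b'} \<subseteq> g"
    unfolding top_two_same_side_def by blast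
  have "n \<le> a' \<or> n = b'"
    using ab'(4) assms(2,3) by blast
  moreover have "b' \<le> n"
    using ab'(3) assms(1) by blast
  ultimately have "b' = n"
    using ab'(1) by linarith
  then have "a' \<in> f - g" "a' \<noteq> n"
    using ab'(1,2,5) assms(3) by auto
  then have "a' < b"
    using assms(5) by blast
  moreover have "b \<le> a'"
    using ab'(4) assms(3,4) \<open>b' = n\<close> by auto
  ultimately show False
    by simp
qed

lemma exceptional_pair_swap:
  assumes f: "f \<subseteq> {..<Suc n}" "n \<in> f" and g: "g \<subseteq> {..<Suc n}" "n \<notin> g" and "s \<notin> f"
    and ab: "a < b" "a \<in> insert s (f - {n}) - g" "b \<in> g - insert s (f - {n})"
    and eq: "insert s (f - {n}) - {a} = g - {b}"
  shows "exceptional_pair f g"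
proof -
  define h where "h = insert s (f - {n})"
  have "finite f"
    using f(1) finite_subset by blast
  have "card h = card f"
    unfolding h_def using \<open>finite f\<close> \<open>s \<notin> f\<close> card_Suc_Diff1[OF \<open>finite f\<close> f(2)] by simp
  moreover have "card h \<le> card (h - {a, s}) + 2"
  proof -
    have "card {a, s} \<le> 2"
      by (simp add: card_insert_if)
    then show ?thesis
      using diff_card_le_card_Diff[of "{a, s}" h] by simp
  qed
  moreover have "card (h - {a, s}) \<le> card (f \<inter> g)"
    using eq \<open>finite f\<close> unfolding h_def[symmetric] by (intro card_mono) (auto simp: h_def)
  moreover have "\<not> top_two_same_side f g"
  proof (rule not_top_two_same_side)
    show "\<forall>x \<in> f \<union> g. x \<le> n"
      using f(1) g(1) by auto
    show "b \<in> g - f"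
      using ab(3) g(2) by blast
    show "\<forall>x \<in> f - g. x = n \<or> x < b"
    proof
      fix x assume x: "x \<in> f - g"
      show "x = n \<or> x < b"
      proof (cases "x = n")
        case False
        then have "x = a"
          using x eq by blast
        then show ?thesis
          using ab(1) by simp
      qed simp
    qed
  qed (use f g in auto)
  ultimately show ?thesis
    unfolding exceptional_pair_def by linarith
qed

lemma exceptional_pair_pivot_step:
  assumes f: "f \<subseteq> {..<Suc n}" "n \<in> f" and g: "g \<subseteq> {..<Suc n}" "n \<notin> g" and "card f = card g"
    and step: "pivot_step g (f - {n}) \<or> (\<exists>s. s \<notin> f \<and> pivot_step g (insert s (f - {n})))"
  shows "exceptional_pair f g"
proof -
  have "finite f" "finite g"
    using f(1) g(1) finite_subset by blast+
  have card_f: "card (f - {n}) + 1 = card f"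
    using card_Suc_Diff1[OF \<open>finite f\<close> f(2)] by simp
  from step show ?thesis
  proof (elim disjE exE conjE)
    assume "pivot_step g (f - {n})"
    then have "f - {n} \<subseteq> g"
      unfolding pivot_step_def
    proof (elim disjE exE conjE)
      fix a b assume "a \<in> f - {n} - g" "b \<in> g - (f - {n})" "f - {n} - {a} = g - {b}"
      moreover have "card (f - {n} - {a}) + 1 = card (f - {n})" "card (g - {b}) + 1 = card g"
        using card_Suc_Diff1[of "f - {n}" a] card_Suc_Diff1[OF \<open>finite g\<close>, of b] \<open>finite f\<close> calculation
        by simp_all
      ultimately have "card (f - {n}) = card g"
        by simp
      then show "f - {n} \<subseteq> g"
        using card_f \<open>card f = card g\<close> by simp
    qed
    then have "card (f - {n}) \<le> card (f \<inter> g)"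
      using \<open>finite f\<close> by (intro card_mono) auto
    then show ?thesis
      using exceptional_pair_if_card_Int[OF \<open>finite f\<close> \<open>finite g\<close> \<open>card f = card g\<close>] card_f by simp
  next
    fix s assume "s \<notin> f" and "pivot_step g (insert s (f - {n}))"
    moreover have "card (insert s (f - {n})) = card g"
      using \<open>s \<notin> f\<close> \<open>finite f\<close> card_f \<open>card f = card g\<close> by simp
    ultimately obtain a b where "a < b" "a \<in> insert s (f - {n}) - g" "b \<in> g - insert s (f - {n})"
      "insert s (f - {n}) - {a} = g - {b}"
      unfolding pivot_step_def by auto
    then show ?thesis
      using exceptional_pair_swap[OF f g \<open>s \<notin> f\<close>] by blast
  qed
qed

lemma exceptional_pair_if_insert_eq:
  assumes "finite f" "finite g" "card f = card g" "n \<in> f" "n \<in> g"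
    and "insert x (f - {n}) = insert y (g - {n})"
  shows "exceptional_pair f g"
proof -
  have "insert n (f - {n} - {y}) \<subseteq> f \<inter> g"
    using assms(4-6) by blast
  then have "card (insert n (f - {n} - {y})) \<le> card (f \<inter> g)"
    using assms(1) by (intro card_mono) simp_all
  moreover have "card (insert n (f - {n} - {y})) = card (f - {n} - {y}) + 1"
    using assms(1) by simp
  moreover have "card (f - {n}) \<le> card (f - {n} - {y}) + 1"
    using diff_card_le_card_Diff[of "{y}" "f - {n}"] by simp
  ultimately have "card f \<le> card (f \<inter> g) + 1"
    using card_Suc_Diff1[OF assms(1,4)] by simp
  then show ?thesis
    using exceptional_pair_if_card_Int[OF assms(1-3)] by simp
qed

lemma exceptional_pair_common_section:
  assumes f: "f \<subseteq> {..<Suc n}" "n \<in> f" and g: "g \<subseteq> {..<Suc n}" "n \<in> g" and "card f = card g"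
    and sections: "tflat_section n B1 e1 (f - {n}) E" "tflat_section n B2 e2 (g - {n}) E" and "E \<noteq> {}"
  shows "exceptional_pair f g"
proof -
  have f': "f - {n} \<subseteq> {..<n}" and g': "g - {n} \<subseteq> {..<n}"
    using f g by auto
  have "finite f" "finite g"
    using f(1) g(1) finite_subset by blast+
  note close = exceptional_pair_if_insert_eq[OF \<open>finite f\<close> \<open>finite g\<close> \<open>card f = card g\<close> f(2) g(2)]
  have card_eq: "card (f - {n}) = card (g - {n})"
    using \<open>card f = card g\<close> f(2) g(2) \<open>finite f\<close> \<open>finite g\<close> by simp
  have card_insert: "card (insert s X) = card X + 1" if "s \<notin> X" "X \<subseteq> {..<n}" for s X
    using that finite_subset[OF that(2)] by simp
  have "(E = tflat n B1 e1 (f - {n}) \<or>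
        (\<exists>s B e. s < n \<and> s \<notin> f - {n} \<and> E = tflat n B e (insert s (f - {n}))))
      \<and> (E = tflat n B2 e2 (g - {n}) \<or>
        (\<exists>s B e. s < n \<and> s \<notin> g - {n} \<and> E = tflat n B e (insert s (g - {n}))))"
    using sections \<open>E \<noteq> {}\<close> unfolding tflat_section_def by blast
  then show ?thesis
  proof (elim conjE disjE exE)
    assume "E = tflat n B1 e1 (f - {n})" "E = tflat n B2 e2 (g - {n})"
    then have "insert n (f - {n}) = insert n (g - {n})"
      using tflat_pivots_unique[OF f' g'] by metis
    then show ?thesis
      by (rule close)
  next
    fix s B e assume s: "s < n" "s \<notin> g - {n}"
      and "E = tflat n B1 e1 (f - {n})" "E = tflat n B e (insert s (g - {n}))"
    moreover have "insert s (g - {n}) \<subseteq> {..<n}"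
      using s g' by simp
    ultimately have "f - {n} = insert s (g - {n})"
      using tflat_pivots_unique[OF f'] by metis
    then show ?thesis
      using card_eq card_insert[OF s(2) g'] by simp
  next
    fix s B e assume s: "s < n" "s \<notin> f - {n}"
      and "E = tflat n B e (insert s (f - {n}))" "E = tflat n B2 e2 (g - {n})"
    moreover have "insert s (f - {n}) \<subseteq> {..<n}"
      using s f' by simp
    ultimately have "insert s (f - {n}) = g - {n}"
      using tflat_pivots_unique[OF _ g'] by metis
    then show ?thesis
      using card_eq card_insert[OF s(2) f'] by simp
  next
    fix s B e s' B' e' assume "s < n" "s' < n"
      and "E = tflat n B e (insert s (f - {n}))" "E = tflat n B' e' (insert s' (g - {n}))"
    moreover have "insert s (f - {n}) \<subseteq> {..<n}" "insert s' (g - {n}) \<subseteq> {..<n}"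
      using \<open>s < n\<close> \<open>s' < n\<close> f' g' by simp_all
    ultimately have "insert s (f - {n}) = insert s' (g - {n})"
      using tflat_pivots_unique by metis
    then show ?thesis
      by (rule close)
  qed
qed

lemma sym_diff_tflat_Suc_eqD:
  assumes f: "f \<subseteq> {..<Suc n}" and g: "g \<subseteq> {..<Suc n}" and Y: "Y \<subseteq> {..<n}"
    and eq: "sym_diff (tflat (Suc n) B1 e1 f) (tflat (Suc n) B1' e1' f)
      = sym_diff (tflat (Suc n) B2 e2 g) (tflat (Suc n) B2' e2' g)"
  shows "((Y \<in> tflat n B1 e1 (f - {n}) \<and> (n \<in> f \<longrightarrow> \<not> tri_rhs B1 e1 n Y))
        \<noteq> (Y \<in> tflat n B1' e1' (f - {n}) \<and> (n \<in> f \<longrightarrow> \<not> tri_rhs B1' e1' n Y)))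
      \<longleftrightarrow> ((Y \<in> tflat n B2 e2 (g - {n}) \<and> (n \<in> g \<longrightarrow> \<not> tri_rhs B2 e2 n Y))
        \<noteq> (Y \<in> tflat n B2' e2' (g - {n}) \<and> (n \<in> g \<longrightarrow> \<not> tri_rhs B2' e2' n Y)))"
    and "((Y \<in> tflat n B1 e1 (f - {n}) \<and> (n \<in> f \<longrightarrow> tri_rhs B1 e1 n Y))
        \<noteq> (Y \<in> tflat n B1' e1' (f - {n}) \<and> (n \<in> f \<longrightarrow> tri_rhs B1' e1' n Y)))
      \<longleftrightarrow> ((Y \<in> tflat n B2 e2 (g - {n}) \<and> (n \<in> g \<longrightarrow> tri_rhs B2 e2 n Y))
        \<noteq> (Y \<in> tflat n B2' e2' (g - {n}) \<and> (n \<in> g \<longrightarrow> tri_rhs B2' e2' n Y)))"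
  using mem_sym_diff_tflat_Suc[OF f Y, of B1 e1 B1' e1'] mem_sym_diff_tflat_Suc[OF g Y, of B2 e2 B2' e2']
  unfolding eq by simp_all

lemma sym_diff_tflat_lower_eq:
  assumes f: "f \<subseteq> {..<Suc n}" and g: "g \<subseteq> {..<Suc n}" and "n \<in> f \<longleftrightarrow> n \<in> g"
    and eq: "sym_diff (tflat (Suc n) B1 e1 f) (tflat (Suc n) B1' e1' f)
      = sym_diff (tflat (Suc n) B2 e2 g) (tflat (Suc n) B2' e2' g)"
  shows "sym_diff (tflat n B1 e1 (f - {n})) (tflat n B1' e1' (f - {n}))
      = sym_diff (tflat n B2 e2 (g - {n})) (tflat n B2' e2' (g - {n}))"
proof (rule family_eqI[of _ n])
  fix Y assume Y: "Y \<subseteq> {..<n}"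
  show "Y \<in> sym_diff (tflat n B1 e1 (f - {n})) (tflat n B1' e1' (f - {n}))
      \<longleftrightarrow> Y \<in> sym_diff (tflat n B2 e2 (g - {n})) (tflat n B2' e2' (g - {n}))"
    using sym_diff_tflat_Suc_eqD[OF f g Y eq] \<open>n \<in> f \<longleftrightarrow> n \<in> g\<close> by (cases "n \<in> f") auto
qed (auto dest: tflat_subset)

lemma tflat_cancel_one_top:
  assumes f: "f \<subseteq> {..<Suc n}" "n \<in> f" and g: "g \<subseteq> {..<Suc n}" "n \<notin> g" and "card f = card g"
    and eq: "sym_diff (tflat (Suc n) B1 e1 f) (tflat (Suc n) B1' e1' f)
      = sym_diff (tflat (Suc n) B2 e2 g) (tflat (Suc n) B2' e2' g)"
  shows "tflat (Suc n) B1 e1 f = tflat (Suc n) B1' e1' f \<or> exceptional_pair f g"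
proof -
  define A where "A = tflat n B1 e1 (f - {n})"
  define E where "E = {Y \<in> A. tri_rhs B1 e1 n Y \<noteq> tri_rhs B1' e1' n Y}"
  have f': "f - {n} \<subseteq> {..<n}" and g': "g \<subseteq> {..<n}" and "g - {n} = g"
    using f g by (auto simp: less_Suc_eq)
  note lower = sym_diff_tflat_Suc_eqD(1)[OF f(1) g(1) _ eq] and upper = sym_diff_tflat_Suc_eqD(2)[OF f(1) g(1) _ eq]
  \<comment> \<open>the pivot \<open>n\<close> of \<open>f\<close> is free for \<open>g\<close>, so the two halves of the equation coincide on the right\<close>
  have same_lower: "Y \<in> A \<longleftrightarrow> Y \<in> tflat n B1' e1' (f - {n})" if "Y \<subseteq> {..<n}" for Y
    using lower[OF that] upper[OF that] f(2) g(2) unfolding A_def by auto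
  have "sym_diff (tflat n B2 e2 g) (tflat n B2' e2' g) = E"
  proof (rule family_eqI[of _ n])
    fix Y assume Y: "Y \<subseteq> {..<n}"
    show "Y \<in> sym_diff (tflat n B2 e2 g) (tflat n B2' e2' g) \<longleftrightarrow> Y \<in> E"
      using lower[OF Y] same_lower[OF Y] f(2) g(2) \<open>g - {n} = g\<close> unfolding E_def A_def by auto
  qed (auto simp: E_def A_def dest: tflat_subset)
  then have step: "pivot_step g h" if "E = tflat n B e h" "h \<subseteq> {..<n}" for B e h
    using sym_diff_tflat_pivot_step[OF g' that(2)] that(1) by simp
  from tflat_section_disagreement[OF f', where B=B1 and e=e1 and C=B1 and d=e1 and C'=B1' and d'=e1']
  show ?thesis
    unfolding tflat_section_def E_def[unfolded A_def, symmetric]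
  proof (elim disjE exE conjE)
    assume "E = {}"
    then have "tflat (Suc n) B1 e1 f = tflat (Suc n) B1' e1' f"
      using same_lower unfolding E_def A_def
      by (intro tflat_Suc_eq_if_rows_agree f(1)) (auto dest: tflat_subset)
    then show ?thesis ..
  next
    assume "E = tflat n B1 e1 (f - {n})"
    then have "pivot_step g (f - {n})"
      using step f' by blast
    then show ?thesis
      using exceptional_pair_pivot_step[OF f g \<open>card f = card g\<close>] by blast
  next
    fix s B e assume "s < n" "s \<notin> f - {n}" "E = tflat n B e (insert s (f - {n}))"
    moreover have "insert s (f - {n}) \<subseteq> {..<n}"
      using \<open>s < n\<close> f' by simp
    ultimately have "s \<notin> f" "pivot_step g (insert s (f - {n}))"
      using step by auto
    then show ?thesis
      using exceptional_pair_pivot_step[OF f g \<open>card f = card g\<close>] by blast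
  qed
qed

lemma tflat_cancel_both_top:
  assumes f: "f \<subseteq> {..<Suc n}" "n \<in> f" and g: "g \<subseteq> {..<Suc n}" "n \<in> g" and "card f = card g"
    and eq: "sym_diff (tflat (Suc n) B1 e1 f) (tflat (Suc n) B1' e1' f)
      = sym_diff (tflat (Suc n) B2 e2 g) (tflat (Suc n) B2' e2' g)"
    and A: "tflat n B1 e1 (f - {n}) = tflat n B1' e1' (f - {n})"
  shows "tflat (Suc n) B1 e1 f = tflat (Suc n) B1' e1' f \<or> exceptional_pair f g"
proof -
  define E where "E = {Y \<in> tflat n B1 e1 (f - {n}). tri_rhs B1 e1 n Y \<noteq> tri_rhs B1' e1' n Y}"
  have f': "f - {n} \<subseteq> {..<n}" and g': "g - {n} \<subseteq> {..<n}"
    using f g by auto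
  have G: "tflat n B2 e2 (g - {n}) = tflat n B2' e2' (g - {n})"
    using sym_diff_tflat_lower_eq[OF f(1) g(1) _ eq] f(2) g(2) A by auto
  have "E = {Y \<in> tflat n B2 e2 (g - {n}). tri_rhs B2 e2 n Y \<noteq> tri_rhs B2' e2' n Y}"
  proof (rule family_eqI[of _ n])
    fix Y assume Y: "Y \<subseteq> {..<n}"
    show "Y \<in> E \<longleftrightarrow> Y \<in> {Y \<in> tflat n B2 e2 (g - {n}). tri_rhs B2 e2 n Y \<noteq> tri_rhs B2' e2' n Y}"
      using sym_diff_tflat_Suc_eqD(1)[OF f(1) g(1) Y eq] f(2) g(2) A G unfolding E_def by auto
  qed (auto simp: E_def dest: tflat_subset)
  then have section_g: "tflat_section n B2 e2 (g - {n}) E"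
    using tflat_section_disagreement[OF g'] by simp
  have section_f: "tflat_section n B1 e1 (f - {n}) E"
    unfolding E_def by (rule tflat_section_disagreement[OF f'])
  show ?thesis
  proof (cases "E = {}")
    case True
    then have "tflat (Suc n) B1 e1 f = tflat (Suc n) B1' e1' f"
      using A unfolding E_def by (intro tflat_Suc_eq_if_rows_agree f(1)) auto
    then show ?thesis ..
  next
    case False
    then show ?thesis
      using exceptional_pair_common_section[OF f g \<open>card f = card g\<close> section_f section_g] by blast
  qed
qed

lemma sym_diff_tflat_cancel:
  assumes "f \<subseteq> {..<n}" "g \<subseteq> {..<n}" "card f = card g"
    and "sym_diff (tflat n B1 e1 f) (tflat n B1' e1' f) = sym_diff (tflat n B2 e2 g) (tflat n B2' e2' g)"
  shows "tflat n B1 e1 f = tflat n B1' e1' f \<or> exceptional_pair f g"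
  using assms
proof (induction n arbitrary: f g B1 e1 B1' e1' B2 e2 B2' e2')
  case 0
  then show ?case
    using exceptional_pair_if_card_Int[of "{}" "{}"] by simp
next
  case (Suc n)
  note f = Suc.prems(1) and g = Suc.prems(2) and card = Suc.prems(3) and eq = Suc.prems(4)
  have f': "f - {n} \<subseteq> {..<n}" and g': "g - {n} \<subseteq> {..<n}"
    using f g by auto
  have "finite f" "finite g"
    using f g finite_subset by blast+
  have IH: "tflat n B1 e1 (f - {n}) = tflat n B1' e1' (f - {n}) \<or> exceptional_pair (f - {n}) (g - {n})"
    if "n \<in> f \<longleftrightarrow> n \<in> g"
  proof (rule Suc.IH[OF f' g'])
    show "card (f - {n}) = card (g - {n})"
      using card that \<open>finite f\<close> \<open>finite g\<close> by (cases "n \<in> f") simp_all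
  qed (rule sym_diff_tflat_lower_eq[OF f g that eq])
  consider "n \<in> f" "n \<in> g" | "n \<in> f" "n \<notin> g" | "n \<notin> f" "n \<in> g" | "n \<notin> f" "n \<notin> g"
    by blast
  then show ?case
  proof cases
    case 1
    then show ?thesis
      using IH tflat_cancel_both_top[OF f _ g _ card eq] exceptional_pair_insert[OF \<open>finite f\<close>] by blast
  next
    case 2
    then show ?thesis
      using tflat_cancel_one_top[OF f _ g _ card eq] by blast
  next
    case 3
    \<comment> \<open>exchange \<open>f\<close> and \<open>g\<close>; if \<open>g\<close>'s two flats coincide, both sides of \<open>eq\<close> are empty\<close>
    then have "tflat (Suc n) B2 e2 g = tflat (Suc n) B2' e2' g \<or> exceptional_pair g f"
      using tflat_cancel_one_top[OF g _ f _ card[symmetric] eq[symmetric]] by blast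
    then show ?thesis
      using eq exceptional_pair_sym[OF card[symmetric]] by auto
  next
    case 4
    then show ?thesis
      using IH tflat_Suc_eq_if_rows_agree[OF f, of B1 e1 B1' e1'] by auto
  qed
qed

lemma orbit_sum_cancel:
  assumes f: "f \<subseteq> {..<m}" and g: "g \<subseteq> {..<m}" and "card f = card g" "\<not> exceptional_pair f g"
    and "a \<in> orbit m f" "a' \<in> orbit m f" "b \<in> orbit m g" "b' \<in> orbit m g"
    and sum_eq: "radd a b = radd a' b'"
  shows "a = a' \<and> b = b'"
proof -
  obtain B1 e1 B1' e1' B2 e2 B2' e2' where acts: "a = lta_act (B1, e1) f" "a' = lta_act (B1', e1') f"
    "b = lta_act (B2, e2) g" "b' = lta_act (B2', e2') g"
    using assms(5-8) unfolding orbit_def by auto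
  have "sym_diff (tflat m B1 e1 f) (tflat m B1' e1' f) = sym_diff (tflat m B2 e2 g) (tflat m B2' e2' g)"
  proof (rule family_eqI[of _ m])
    fix X assume X: "X \<subseteq> {..<m}"
    have "poly_eval (radd a b) X \<longleftrightarrow> poly_eval (radd a' b') X"
      by (simp only: sum_eq)
    then show "X \<in> sym_diff (tflat m B1 e1 f) (tflat m B1' e1' f)
        \<longleftrightarrow> X \<in> sym_diff (tflat m B2 e2 g) (tflat m B2' e2' g)"
      unfolding acts using X
      by (auto simp: poly_eval_radd finite_lta_act poly_eval_lta_act_tflat[OF f] poly_eval_lta_act_tflat[OF g]
          Int_absorb2)
  qed (auto dest: tflat_subset)
  then have "tflat m B1 e1 f = tflat m B1' e1' f"
    using sym_diff_tflat_cancel[OF f g] assms(3,4) by blast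
  then have "a = a'"
    unfolding acts by (rule tflat_determines_lta_act[OF f])
  moreover from this have "b = b'"
    using sum_eq unfolding radd_def by blast
  ultimately show ?thesis ..
qed

theorem theorem7:
  fixes m r :: nat and I :: "monomial set" and f g :: monomial
  assumes "decreasing m I"
    and "r = Max (card ` I)"
    and "f \<in> I" and "g \<in> I" and "card f = r" and "card g = r"
    and "(\<exists>a b. a < b \<and> a \<in> (f - g) \<union> (g - f) \<and> b \<in> (f - g) \<union> (g - f)
              \<and> (\<forall>c \<in> (f - g) \<union> (g - f). c \<le> a \<or> c = b)
              \<and> ({a, b} \<subseteq> f \<or> {a, b} \<subseteq> g))
         \<or> card (f \<inter> g) + 2 < r"
  shows "card (sumset (orbit m f) (orbit m g)) = card (orbit m f) * card (orbit m g)"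
proof -
  have f: "f \<subseteq> {..<m}" and g: "g \<subseteq> {..<m}"
    using assms(1,3,4) unfolding decreasing_def monomials_def by auto
  have card: "card f = card g" and "\<not> exceptional_pair f g"
    using assms(5-7) unfolding exceptional_pair_def top_two_same_side_def by auto
  then have "inj_on (\<lambda>(a, b). radd a b) (orbit m f \<times> orbit m g)"
    using orbit_sum_cancel[OF f g card] by (auto intro!: inj_onI)
  moreover have "sumset (orbit m f) (orbit m g) = (\<lambda>(a, b). radd a b) ` (orbit m f \<times> orbit m g)"
    unfolding sumset_def by auto
  ultimately show ?thesis
    by (simp add: card_image card_cartesian_product)
qed

end
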